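(* Let $G$ be a finite transitive permutation group on a set $V$ whose point stabilizers have order $2$ or $3$. Then the complement $\overline{\Gamma_G}$ of the derangement graph of $G$ is arc-transitive.
   Context: An element of $G$ is a derangement if it fixes no point of $V$. Let $\mathcal{D}$ be the set of derangements of $G$. The derangement graph $\Gamma_G=\mathrm{Cay}(G,\mathcal{D})$ is the graph with vertex set $G$ in which $g,h\in G$ are adjacent if and only if $g^{-1}h \in \mathcal{D}$; $\overline{\Gamma_G}$ is its complement graph (distinct $g,h$ adjacent iff $g^{-1}h$ fixes some point). *)

theory Defs
  imports "HOL-Algebra.Bij" "HOL-Algebra.Group"
begin

definition transitive_on :: "'a set \<Rightarrow> ('a \<Rightarrow> 'a) set \<Rightarrow> bool" where
  "transitive_on V G \<longleftrightarrow> (\<forall>u\<in>V. \<forall>w\<in>V. \<exists>g\<in>G. g u = w)"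

definition stabilizer :: "'a set \<Rightarrow> ('a \<Rightarrow> 'a) set \<Rightarrow> 'a \<Rightarrow> ('a \<Rightarrow> 'a) set" where
  "stabilizer V G v = {g \<in> G. g v = v}"

definition derangement :: "'a set \<Rightarrow> ('a \<Rightarrow> 'a) \<Rightarrow> bool" where
  "derangement V g \<longleftrightarrow> (\<forall>v\<in>V. g v \<noteq> v)"

text \<open>Adjacency in the complement of the derangement graph Cay(G, D):
  distinct g, h adjacent iff g^-1 h fixes some point.\<close>
definition compl_derangement_adj :: "'a set \<Rightarrow> ('a \<Rightarrow> 'a) \<Rightarrow> ('a \<Rightarrow> 'a) \<Rightarrow> bool" where
  "compl_derangement_adj V g h \<longleftrightarrow>
     g \<noteq> h \<and> \<not> derangement V (inv\<^bsub>BijGroup V\<^esub> g \<otimes>\<^bsub>BijGroup V\<^esub> h)"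

definition graph_automorphism :: "'v set \<Rightarrow> ('v \<Rightarrow> 'v \<Rightarrow> bool) \<Rightarrow> ('v \<Rightarrow> 'v) \<Rightarrow> bool" where
  "graph_automorphism X E \<sigma> \<longleftrightarrow>
     bij_betw \<sigma> X X \<and> (\<forall>x\<in>X. \<forall>y\<in>X. E x y \<longleftrightarrow> E (\<sigma> x) (\<sigma> y))"

definition arc_transitive :: "'v set \<Rightarrow> ('v \<Rightarrow> 'v \<Rightarrow> bool) \<Rightarrow> bool" where
  "arc_transitive X E \<longleftrightarrow>
     (\<forall>a\<in>X. \<forall>b\<in>X. \<forall>c\<in>X. \<forall>d\<in>X. E a b \<and> E c d \<longrightarrow>
        (\<exists>\<sigma>. graph_automorphism X E \<sigma> \<and> \<sigma> a = c \<and> \<sigma> b = d))"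

end

theory Submission
  imports Defs
begin

text \<open>Adjacency in \<open>\<overline>\<Gamma>\<^sub>G\<close> depends only on \<open>g\<inverse>h\<close>, and the set of
  non-derangements is closed under conjugation and inversion, so the maps \<open>x \<mapsto> p x q\<close> and
  \<open>x \<mapsto> x\<inverse>\<close> are graph automorphisms; with them an arc \<open>(a, b)\<close> can be moved onto
  \<open>(c, d)\<close> as soon as \<open>c\<inverse>d\<close> is conjugate to \<open>a\<inverse>b\<close> or to its inverse. Both elements are
  non-trivial and fix a point; by transitivity a conjugate of \<open>a\<inverse>b\<close> fixes the point fixed by
  \<open>c\<inverse>d\<close>, and a group of order at most 3 has at most two non-trivial elements, which are mutually
  inverse.\<close>

definition cayley_adj :: "('a, 'b) monoid_scheme \<Rightarrow> 'a set \<Rightarrow> 'a \<Rightarrow> 'a \<Rightarrow> bool" where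
  "cayley_adj G S x y \<longleftrightarrow> x \<noteq> y \<and> inv\<^bsub>G\<^esub> x \<otimes>\<^bsub>G\<^esub> y \<in> S"

lemma graph_automorphism_comp:
  assumes "graph_automorphism X E \<sigma>" and "graph_automorphism X E \<tau>"
  shows "graph_automorphism X E (\<sigma> \<circ> \<tau>)"
  using assms unfolding graph_automorphism_def
  by (auto simp: bij_betw_trans) (meson bij_betwE)+

context group
begin

lemma inv_mult_cancel_left [simp]:
  "x \<in> carrier G \<Longrightarrow> y \<in> carrier G \<Longrightarrow> inv x \<otimes> (x \<otimes> y) = y"
  by (simp flip: m_assoc)

lemma mult_inv_cancel_left [simp]:
  "x \<in> carrier G \<Longrightarrow> y \<in> carrier G \<Longrightarrow> x \<otimes> (inv x \<otimes> y) = y"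
  by (simp flip: m_assoc)

lemma cayley_adj_translation_automorphism:
  assumes H: "subgroup H G"
    and S_conj: "\<And>g s. g \<in> H \<Longrightarrow> s \<in> H \<Longrightarrow> g \<otimes> s \<otimes> inv g \<in> S \<longleftrightarrow> s \<in> S"
    and p: "p \<in> H" and q: "q \<in> H"
  shows "graph_automorphism H (cayley_adj G S) (\<lambda>x. p \<otimes> x \<otimes> q)"
proof -
  have pq: "p \<in> carrier G" "q \<in> carrier G"
    using p q subgroup.subset[OF H] by auto
  have "bij_betw (\<lambda>x. p \<otimes> x \<otimes> q) H H"
  proof (rule bij_betwI[where g = "\<lambda>y. inv p \<otimes> y \<otimes> inv q"])
    show "(\<lambda>x. p \<otimes> x \<otimes> q) \<in> H \<rightarrow> H" "(\<lambda>y. inv p \<otimes> y \<otimes> inv q) \<in> H \<rightarrow> H"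
      using H p q by (auto intro!: subgroup.m_closed subgroup.m_inv_closed)
  qed (use pq subgroup.subset[OF H] in \<open>auto simp: m_assoc\<close>)
  moreover have "cayley_adj G S x y \<longleftrightarrow> cayley_adj G S (p \<otimes> x \<otimes> q) (p \<otimes> y \<otimes> q)"
    if "x \<in> H" "y \<in> H" for x y
  proof -
    have xy: "x \<in> carrier G" "y \<in> carrier G"
      using that subgroup.subset[OF H] by auto
    have "inv (p \<otimes> x \<otimes> q) \<otimes> (p \<otimes> y \<otimes> q) = inv q \<otimes> (inv x \<otimes> y) \<otimes> inv (inv q)"
      using pq xy by (simp add: inv_mult_group m_assoc)
    moreover have "inv q \<otimes> (inv x \<otimes> y) \<otimes> inv (inv q) \<in> S \<longleftrightarrow> inv x \<otimes> y \<in> S"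
      using H that q by (intro S_conj) (auto intro: subgroup.m_closed subgroup.m_inv_closed)
    ultimately show ?thesis
      using pq xy by (simp add: cayley_adj_def m_assoc)
  qed
  ultimately show ?thesis
    unfolding graph_automorphism_def by blast
qed

lemma cayley_adj_inv_automorphism:
  assumes H: "subgroup H G"
    and S_conj: "\<And>g s. g \<in> H \<Longrightarrow> s \<in> H \<Longrightarrow> g \<otimes> s \<otimes> inv g \<in> S \<longleftrightarrow> s \<in> S"
    and S_inv: "\<And>s. s \<in> H \<Longrightarrow> inv s \<in> S \<longleftrightarrow> s \<in> S"
  shows "graph_automorphism H (cayley_adj G S) (m_inv G)"
proof -
  have "bij_betw (m_inv G) H H"
    by (rule bij_betwI[where g = "m_inv G"])
      (use H subgroup.subset[OF H] in \<open>auto intro: subgroup.m_inv_closed\<close>)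
  moreover have "cayley_adj G S x y \<longleftrightarrow> cayley_adj G S (inv x) (inv y)"
    if "x \<in> H" "y \<in> H" for x y
  proof -
    have xy: "x \<in> carrier G" "y \<in> carrier G"
      using that subgroup.subset[OF H] by auto
    have "inv (inv x) \<otimes> inv y = x \<otimes> inv (inv x \<otimes> y) \<otimes> inv x"
      using xy by (simp add: inv_mult_group m_assoc)
    moreover have "inv x \<otimes> y \<in> H"
      using H that by (auto intro: subgroup.m_closed subgroup.m_inv_closed)
    then have "x \<otimes> inv (inv x \<otimes> y) \<otimes> inv x \<in> S \<longleftrightarrow> inv x \<otimes> y \<in> S"
      using H that by (simp add: S_conj S_inv subgroup.m_inv_closed)
    ultimately show ?thesis
      using xy by (auto simp: cayley_adj_def inj_on_eq_iff[OF inv_inj])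
  qed
  ultimately show ?thesis
    unfolding graph_automorphism_def by blast
qed

lemma cayley_adj_arc_transitive:
  assumes H: "subgroup H G"
    and S_conj: "\<And>g s. g \<in> H \<Longrightarrow> s \<in> H \<Longrightarrow> g \<otimes> s \<otimes> inv g \<in> S \<longleftrightarrow> s \<in> S"
    and S_inv: "\<And>s. s \<in> H \<Longrightarrow> inv s \<in> S \<longleftrightarrow> s \<in> S"
    and conjugate: "\<And>s t. \<lbrakk>s \<in> H \<inter> S; t \<in> H \<inter> S; s \<noteq> \<one>; t \<noteq> \<one>\<rbrakk> \<Longrightarrow>
      \<exists>k\<in>H. t = k \<otimes> s \<otimes> inv k \<or> t = inv (k \<otimes> s \<otimes> inv k)"
  shows "arc_transitive H (cayley_adj G S)"
  unfolding arc_transitive_def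
proof (intro ballI impI)
  fix a b c d
  assume abcd: "a \<in> H" "b \<in> H" "c \<in> H" "d \<in> H"
    and "cayley_adj G S a b \<and> cayley_adj G S c d"
  then have "a \<noteq> b" "c \<noteq> d" and S: "inv a \<otimes> b \<in> S" "inv c \<otimes> d \<in> S"
    by (auto simp: cayley_adj_def)
  have carr: "a \<in> carrier G" "b \<in> carrier G" "c \<in> carrier G" "d \<in> carrier G"
    using abcd subgroup.subset[OF H] by auto
  have "inv a \<otimes> b \<noteq> \<one>" "inv c \<otimes> d \<noteq> \<one>"
    using \<open>a \<noteq> b\<close> \<open>c \<noteq> d\<close> carr by (auto simp: inv_solve_left')
  moreover have "inv a \<otimes> b \<in> H" "inv c \<otimes> d \<in> H"
    using H abcd by (auto intro: subgroup.m_closed subgroup.m_inv_closed)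
  ultimately obtain k where k: "k \<in> H" and
    "inv c \<otimes> d = k \<otimes> (inv a \<otimes> b) \<otimes> inv k \<or> inv c \<otimes> d = inv (k \<otimes> (inv a \<otimes> b) \<otimes> inv k)"
    using conjugate S by blast
  moreover have "k \<in> carrier G"
    using k subgroup.subset[OF H] by auto
  ultimately consider
      (conj) "d = c \<otimes> k \<otimes> inv a \<otimes> b \<otimes> inv k"
    | (inv_conj) "d = c \<otimes> k \<otimes> inv b \<otimes> (a \<otimes> inv k)"
    using carr by (auto simp: inv_solve_left' inv_mult_group m_assoc)
  then show "\<exists>\<sigma>. graph_automorphism H (cayley_adj G S) \<sigma> \<and> \<sigma> a = c \<and> \<sigma> b = d"
  proof cases
    case conj
    have "graph_automorphism H (cayley_adj G S) (\<lambda>x. c \<otimes> k \<otimes> inv a \<otimes> x \<otimes> inv k)"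
      using H abcd k
      by (intro cayley_adj_translation_automorphism S_conj) (auto intro: subgroup.m_closed subgroup.m_inv_closed)
    with conj show ?thesis
      using carr \<open>k \<in> carrier G\<close> by (intro exI[of _ "\<lambda>x. c \<otimes> k \<otimes> inv a \<otimes> x \<otimes> inv k"]) (simp add: m_assoc)
  next
    case inv_conj
    have "graph_automorphism H (cayley_adj G S) ((\<lambda>x. c \<otimes> k \<otimes> x \<otimes> (a \<otimes> inv k)) \<circ> m_inv G)"
      using H abcd k
      by (intro graph_automorphism_comp cayley_adj_translation_automorphism cayley_adj_inv_automorphism S_conj S_inv)
        (auto intro: subgroup.m_closed subgroup.m_inv_closed)
    with inv_conj show ?thesis
      using carr \<open>k \<in> carrier G\<close> by (intro exI[of _ "(\<lambda>x. c \<otimes> k \<otimes> x \<otimes> (a \<otimes> inv k)) \<circ> m_inv G"]) (simp add: m_assoc)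
  qed
qed

lemma subgroup_card_le_3_nontrivial:
  assumes K: "subgroup K G" "finite K" "card K \<le> 3"
    and st: "s \<in> K" "t \<in> K" "s \<noteq> \<one>" "t \<noteq> \<one>"
  shows "t = s \<or> t = inv s"
proof (rule ccontr)
  assume nt: "\<not> (t = s \<or> t = inv s)"
  have sub: "{\<one>, s, t} \<subseteq> K"
    using K st by (auto intro: subgroup.one_closed)
  moreover have "card {\<one>, s, t} = 3"
    using st nt by auto
  ultimately have K_eq: "K = {\<one>, s, t}"
    using K by (metis card_seteq)
  have sc: "s \<in> carrier G" "t \<in> carrier G"
    using K st subgroup.subset by auto
  have "s \<otimes> t \<in> K"
    using K st by (auto intro: subgroup.m_closed)
  moreover have "s \<otimes> t \<noteq> \<one>"
    using nt sc inv_solve_left[of t s \<one>] by auto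
  moreover have "inv s \<in> K"
    using K st by (auto intro: subgroup.m_inv_closed)
  ultimately show False
    using K_eq nt sc st by auto
qed

end

lemma carrier_BijGroup: "carrier (BijGroup V) = Bij V"
  by (simp add: BijGroup_def)

lemma BijGroup_mult_apply:
  "x \<in> Bij V \<Longrightarrow> y \<in> Bij V \<Longrightarrow> v \<in> V \<Longrightarrow> (x \<otimes>\<^bsub>BijGroup V\<^esub> y) v = x (y v)"
  by (simp add: BijGroup_def compose_def)

lemma BijGroup_inv_apply_eq_iff:
  assumes "x \<in> Bij V" "u \<in> V" "v \<in> V"
  shows "(inv\<^bsub>BijGroup V\<^esub> x) u = v \<longleftrightarrow> x v = u"
  using assms by (auto simp: inv_BijGroup Bij_def bij_betw_def f_inv_into_f inv_into_f_f)

lemma BijGroup_conj_apply: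
  assumes "k \<in> Bij V" "s \<in> Bij V" "v \<in> V"
  shows "(k \<otimes>\<^bsub>BijGroup V\<^esub> s \<otimes>\<^bsub>BijGroup V\<^esub> inv\<^bsub>BijGroup V\<^esub> k) (k v) = k (s v)"
proof -
  interpret group "BijGroup V" by (rule group_BijGroup)
  have "k \<otimes>\<^bsub>BijGroup V\<^esub> s \<in> Bij V" "inv\<^bsub>BijGroup V\<^esub> k \<in> Bij V" "k v \<in> V"
    using assms by (auto intro: Bij_imp_funcset[THEN funcset_mem] simp flip: carrier_BijGroup)
  then have "(k \<otimes>\<^bsub>BijGroup V\<^esub> s \<otimes>\<^bsub>BijGroup V\<^esub> inv\<^bsub>BijGroup V\<^esub> k) (k v)
      = (k \<otimes>\<^bsub>BijGroup V\<^esub> s) ((inv\<^bsub>BijGroup V\<^esub> k) (k v))"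
    by (simp add: BijGroup_mult_apply)
  also have "\<dots> = (k \<otimes>\<^bsub>BijGroup V\<^esub> s) v"
    using assms BijGroup_inv_apply_eq_iff[of k V "k v" v] \<open>k v \<in> V\<close> by simp
  also have "\<dots> = k (s v)"
    using assms by (simp add: BijGroup_mult_apply)
  finally show ?thesis .
qed

lemma derangement_conj_iff:
  assumes k: "k \<in> Bij V" and s: "s \<in> Bij V"
  shows "derangement V (k \<otimes>\<^bsub>BijGroup V\<^esub> s \<otimes>\<^bsub>BijGroup V\<^esub> inv\<^bsub>BijGroup V\<^esub> k) \<longleftrightarrow> derangement V s"
proof -
  have kV: "k ` V = V" and k_inj: "inj_on k V"
    using k by (auto simp: Bij_def bij_betw_def)
  have sV: "s v \<in> V" if "v \<in> V" for v
    using s that by (rule Bij_imp_funcset[THEN funcset_mem])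
  have "(k \<otimes>\<^bsub>BijGroup V\<^esub> s \<otimes>\<^bsub>BijGroup V\<^esub> inv\<^bsub>BijGroup V\<^esub> k) (k v) = k v \<longleftrightarrow> s v = v"
    if "v \<in> V" for v
    using that sV k_inj by (simp add: BijGroup_conj_apply[OF k s] inj_on_eq_iff)
  then show ?thesis
    unfolding derangement_def using kV by (metis imageE imageI)
qed

lemma derangement_inv_iff:
  assumes "s \<in> Bij V"
  shows "derangement V (inv\<^bsub>BijGroup V\<^esub> s) \<longleftrightarrow> derangement V s"
  using assms by (simp add: derangement_def BijGroup_inv_apply_eq_iff)

lemma subgroup_stabilizer:
  assumes G: "subgroup G (BijGroup V)" and v: "v \<in> V"
  shows "subgroup (stabilizer V G v) (BijGroup V)"
proof -
  interpret group "BijGroup V" by (rule group_BijGroup)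
  have GB: "G \<subseteq> Bij V"
    using subgroup.subset[OF G] by (simp add: carrier_BijGroup)
  show ?thesis
  proof (rule subgroupI)
    show "stabilizer V G v \<subseteq> carrier (BijGroup V)"
      using GB by (auto simp: stabilizer_def carrier_BijGroup)
    have "\<one>\<^bsub>BijGroup V\<^esub> v = v"
      using v by (simp add: BijGroup_def)
    then show "stabilizer V G v \<noteq> {}"
      using subgroup.one_closed[OF G] by (auto simp: stabilizer_def)
  next
    fix g h assume g: "g \<in> stabilizer V G v" and h: "h \<in> stabilizer V G v"
    then have "g \<in> G" "h \<in> G" "g \<in> Bij V" "h \<in> Bij V" "g v = v" "h v = v"
      using GB by (auto simp: stabilizer_def)
    moreover have "(inv\<^bsub>BijGroup V\<^esub> g) v = v"
      using BijGroup_inv_apply_eq_iff[OF \<open>g \<in> Bij V\<close> v v] \<open>g v = v\<close> by simp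
    ultimately show "inv\<^bsub>BijGroup V\<^esub> g \<in> stabilizer V G v" "g \<otimes>\<^bsub>BijGroup V\<^esub> h \<in> stabilizer V G v"
      using G v by (simp_all add: stabilizer_def BijGroup_mult_apply subgroup.m_closed subgroup.m_inv_closed)
  qed
qed

lemma compl_derangement_adj_eq_cayley_adj:
  "compl_derangement_adj V = cayley_adj (BijGroup V) {g. \<not> derangement V g}"
  by (auto simp: fun_eq_iff compl_derangement_adj_def cayley_adj_def)

lemma nontrivial_nonderangements_conjugate:
  assumes G: "subgroup G (BijGroup V)" "finite G" "transitive_on V G"
    and small: "\<And>v. v \<in> V \<Longrightarrow> card (stabilizer V G v) \<le> 3"
    and s: "s \<in> G" "\<not> derangement V s" "s \<noteq> \<one>\<^bsub>BijGroup V\<^esub>"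
    and t: "t \<in> G" "\<not> derangement V t" "t \<noteq> \<one>\<^bsub>BijGroup V\<^esub>"
  shows "\<exists>k\<in>G. t = k \<otimes>\<^bsub>BijGroup V\<^esub> s \<otimes>\<^bsub>BijGroup V\<^esub> inv\<^bsub>BijGroup V\<^esub> k
    \<or> t = inv\<^bsub>BijGroup V\<^esub> (k \<otimes>\<^bsub>BijGroup V\<^esub> s \<otimes>\<^bsub>BijGroup V\<^esub> inv\<^bsub>BijGroup V\<^esub> k)"
proof -
  interpret B: group "BijGroup V" by (rule group_BijGroup)
  have GB: "G \<subseteq> Bij V"
    using subgroup.subset[OF G(1)] by (simp add: carrier_BijGroup)
  obtain v where v: "v \<in> V" "s v = v"
    using s(2) by (auto simp: derangement_def)
  obtain w where w: "w \<in> V" "t w = w"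
    using t(2) by (auto simp: derangement_def)
  obtain k where k: "k \<in> G" "k v = w"
    using G(3) v w unfolding transitive_on_def by blast
  let ?s' = "k \<otimes>\<^bsub>BijGroup V\<^esub> s \<otimes>\<^bsub>BijGroup V\<^esub> inv\<^bsub>BijGroup V\<^esub> k"
  have "?s' \<in> G"
    using G(1) k s by (auto intro: subgroup.m_closed subgroup.m_inv_closed)
  moreover have "?s' w = w"
    using BijGroup_conj_apply[of k V s v] GB k s v by auto
  ultimately have "?s' \<in> stabilizer V G w"
    by (simp add: stabilizer_def)
  moreover have "?s' \<noteq> \<one>\<^bsub>BijGroup V\<^esub>"
  proof
    assume "?s' = \<one>\<^bsub>BijGroup V\<^esub>"
    moreover have "k \<in> carrier (BijGroup V)" "s \<in> carrier (BijGroup V)"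
      using subgroup.mem_carrier[OF G(1)] k(1) s(1) by auto
    ultimately have "k \<otimes>\<^bsub>BijGroup V\<^esub> s = k"
      using B.inv_solve_right'[of "\<one>\<^bsub>BijGroup V\<^esub>" "k \<otimes>\<^bsub>BijGroup V\<^esub> s" k] by simp
    with \<open>k \<in> carrier (BijGroup V)\<close> \<open>s \<in> carrier (BijGroup V)\<close> show False
      using s(3) by simp
  qed
  moreover have "t \<in> stabilizer V G w"
    using t w by (simp add: stabilizer_def)
  moreover have "finite (stabilizer V G w)"
    using G(2) by (simp add: stabilizer_def)
  ultimately have "t = ?s' \<or> t = inv\<^bsub>BijGroup V\<^esub> ?s'"
    using B.subgroup_card_le_3_nontrivial[OF subgroup_stabilizer[OF G(1) w(1)]] small[OF w(1)] t(3)
    by blast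
  then show ?thesis
    using k by blast
qed

theorem lemma2p4:
  fixes V :: "'a set" and G :: "('a \<Rightarrow> 'a) set"
  assumes "subgroup G (BijGroup V)"
    and "finite G"
    and "V \<noteq> {}"
    and "transitive_on V G"
    and "\<forall>v\<in>V. card (stabilizer V G v) = 2 \<or> card (stabilizer V G v) = 3"
  shows "arc_transitive G (compl_derangement_adj V)"
proof -
  interpret B: group "BijGroup V" by (rule group_BijGroup)
  have GB: "\<And>g. g \<in> G \<Longrightarrow> g \<in> Bij V"
    using subgroup.mem_carrier[OF assms(1)] by (simp add: carrier_BijGroup)
  show ?thesis
    unfolding compl_derangement_adj_eq_cayley_adj using assms(1,2,4,5)
    by (intro B.cayley_adj_arc_transitive nontrivial_nonderangements_conjugate)
      (auto simp: GB derangement_conj_iff derangement_inv_iff)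
qed

end
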